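(* In the setting of a cyclic three-element conjugacy class $\mathcal{C}=\{t,x,y\}$ of a finite group $G$ with the conjugation table given below, a spin connection $\{A_a\}_{a\in\mathcal{C}}$ (in the Maurer–Cartan framing) is torsion free if and only if there are functions $\alpha,\beta,\gamma\in H$ with $\alpha+\beta+\gamma=-1$ such that $$A_t=(1+\alpha)e_t+\gamma e_x+\beta e_y,\quad A_x=\gamma e_t+(1+\beta)e_x+\alpha e_y,\quad A_y=\beta e_t+\alpha e_x+(1+\gamma)e_y.$$ In particular the moduli space of torsion free connections is $2|G|$-dimensional, and every torsion free connection satisfies $A_t+A_x+A_y=0$.
   Context: Let $G$ be a finite group, $H=\mathbb{C}[G]$ the algebra of complex-valued functions on $G$, $R_g(f)(h)=f(hg)$ right translation. For a conjugacy class $\mathcal{C}\not\ni e$, $\Omega^1(H)$ is the free left $H$-module with basis $\{e_a\}_{a\in\mathcal{C}}$, $e_af=R_a(f)e_a$, $\mathrm{d}f=\sum_a(R_af-f)e_a$. $\Omega^2(H)=(\Omega^1\otimes_H\Omega^1)/\ker(\mathrm{id}-\Psi)$ with $\Psi(e_a\otimes_H e_b)=e_{aba^{-1}}\otimes_H e_a$, with product $\wedge$; the differential on 1-forms satisfies the Leibniz rule and the Maurer–Cartan equation $\mathrm{d}e_a=\theta\wedge e_a+e_a\wedge\theta$, $\theta=\sum_{a\in\mathcal{C}}e_a$. A conjugacy class with $n\ge2$ elements is cyclic if some $t\in\mathcal{C}$ has $\mathrm{Ad}_t$ acting as a cyclic permutation of $\mathcal{C}\setminus\{t\}$ and $a\mapsto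 ata^{-1}$ a permutation of $\mathcal{C}$. Here $\mathcal{C}=\{t,x,y\}$ with $\mathrm{Ad}_t:(t,x,y)\mapsto(t,y,x)$, $\mathrm{Ad}_x:(t,x,y)\mapsto(y,x,t)$, $\mathrm{Ad}_y:(t,x,y)\mapsto(x,t,y)$. In this case $\Omega^2(H)$ has relations $e_a\wedge e_a=0$, $e_x\wedge e_t+e_y\wedge e_x+e_t\wedge e_y=0$, $e_y\wedge e_t+e_x\wedge e_y+e_t\wedge e_x=0$. A spin connection is a collection $\{A_a\}_{a\in\mathcal{C}}$ of 1-forms, $A_a=\sum_b A_a^b e_b$ with $A_a^b\in H$; it is torsion free if for all $a\in\mathcal{C}$: $\mathrm{d}e_a+\sum_{b\in\mathcal{C}}A_b\wedge(e_{b^{-1}ab}-e_a)=0$. *)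

theory Defs
  imports Complex_Main
begin

text \<open>
  The finite group G is a type 'g of class {group_add, finite}; the group law is
  written additively (it need not be commutative): gh is g + h, the identity is 0,
  g^{-1} is -g.  H = C[G] is the type 'g \<Rightarrow> complex.

  One-forms: a 1-form \<omega> = \<Sum>_{a\<in>C} \<omega>^a e_a is represented by its coefficient
  family \<omega> :: 'g \<Rightarrow> ('g \<Rightarrow> complex) (only the values on C matter).
  Elements of \<Omega>^1 \<otimes>_H \<Omega>^1 (a free left H-module with basis e_a \<otimes> e_b) are
  represented by coefficient families F :: 'g \<Rightarrow> 'g \<Rightarrow> ('g \<Rightarrow> complex),
  F a b being the coefficient of e_a \<otimes> e_b.
\<close>

definition conjg :: "'g::group_add \<Rightarrow> 'g \<Rightarrow> 'g" where
  "conjg a b = a + b + - a"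

definition conj_class :: "'g::group_add \<Rightarrow> 'g set" where
  "conj_class c = {conjg g c | g. True}"

definition Rtr :: "'g::group_add \<Rightarrow> ('g \<Rightarrow> complex) \<Rightarrow> ('g \<Rightarrow> complex)" where
  "Rtr g f = (\<lambda>h. f (h + g))"

definition e1 :: "'g \<Rightarrow> 'g \<Rightarrow> ('g \<Rightarrow> complex)" where
  "e1 c = (\<lambda>b _. if b = c then 1 else 0)"

definition theta :: "'g set \<Rightarrow> 'g \<Rightarrow> ('g \<Rightarrow> complex)" where
  "theta C = (\<lambda>b _. if b \<in> C then 1 else 0)"

text \<open>Product \<omega> \<otimes>_H \<eta> of 1-forms, using e_a f = R_a(f) e_a:
  (\<Sum>_a \<omega>^a e_a)(\<Sum>_b \<eta>^b e_b) = \<Sum>_{a,b} \<omega>^a R_a(\<eta>^b) e_a \<otimes> e_b.\<close>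
definition tens1 :: "('g::group_add \<Rightarrow> 'g \<Rightarrow> complex) \<Rightarrow> ('g \<Rightarrow> 'g \<Rightarrow> complex)
    \<Rightarrow> 'g \<Rightarrow> 'g \<Rightarrow> 'g \<Rightarrow> complex" where
  "tens1 \<omega> \<eta> = (\<lambda>a b h. \<omega> a h * Rtr a (\<eta> b) h)"

text \<open>The braiding \<Psi>(e_a \<otimes> e_b) = e_{a b a^{-1}} \<otimes> e_a is left H-linear; on
  coefficient families, \<Psi>(\<Sum> F(a,b) e_a\<otimes>e_b) = \<Sum> F(a,b) e_{aba^{-1}}\<otimes>e_a.
  An element lies in ker(id - \<Psi>) iff it is fixed by \<Psi>, i.e. iff
  F(aba^{-1}, a) = F(a, b) for all a, b \<in> C (\<Psi> permutes the basis C \<times> C).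
  A 2-form in \<Omega>^2 = (\<Omega>^1 \<otimes>_H \<Omega>^1)/ker(id - \<Psi>) vanishes iff a (any)
  representative lies in ker(id - \<Psi>).\<close>
definition in_ker_Psi :: "'g::group_add set \<Rightarrow> ('g \<Rightarrow> 'g \<Rightarrow> 'g \<Rightarrow> complex) \<Rightarrow> bool" where
  "in_ker_Psi C F \<longleftrightarrow> (\<forall>a\<in>C. \<forall>b\<in>C. F (conjg a b) a = F a b)"

definition wedge_zero :: "'g::group_add set \<Rightarrow> ('g \<Rightarrow> 'g \<Rightarrow> 'g \<Rightarrow> complex) \<Rightarrow> bool" where
  "wedge_zero C F \<longleftrightarrow> in_ker_Psi C F"

text \<open>Maurer--Cartan: d e_a = \<theta> \<wedge> e_a + e_a \<wedge> \<theta> (representative in \<Omega>^1\<otimes>\<Omega>^1).\<close>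
definition d_e :: "'g::group_add set \<Rightarrow> 'g \<Rightarrow> 'g \<Rightarrow> 'g \<Rightarrow> 'g \<Rightarrow> complex" where
  "d_e C a = (\<lambda>c d h. tens1 (theta C) (e1 a) c d h + tens1 (e1 a) (theta C) c d h)"

text \<open>A spin connection: A a b = A_a^b \<in> H, i.e. A_a = \<Sum>_{b\<in>C} A_a^b e_b.\<close>
definition torsion_free ::
    "'g::group_add set \<Rightarrow> ('g \<Rightarrow> 'g \<Rightarrow> 'g \<Rightarrow> complex) \<Rightarrow> bool" where
  "torsion_free C A \<longleftrightarrow>
     (\<forall>a\<in>C. wedge_zero C
        (\<lambda>c d h. d_e C a c d h +
           (\<Sum>b\<in>C. tens1 (A b) (\<lambda>k g. e1 (conjg (- b) a) k g - e1 a k g) c d h)))"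

end

theory Submission
  imports Defs
begin

text \<open>
  Torsion freeness says that for every \<open>a\<close> the coefficients \<open>T\<^sub>a(c, d)\<close> of the torsion of
  \<open>e\<^sub>a\<close> are invariant under \<open>(c, d) \<mapsto> (c d c\<inverse>, c)\<close>.  On \<open>{t, x, y}\<close> this map fixes the
  diagonal and permutes the off-diagonal pairs in two 3-cycles, so torsion freeness is a
  linear system of twelve equations in the nine functions \<open>A\<^sub>a\<^sup>b\<close>, pointwise on \<open>G\<close>.  Six of
  them say \<open>A\<^sub>a\<^sup>b = \<delta>\<^sub>a\<^sub>b + \<lambda>(a b a\<inverse>)\<close> for some \<open>\<lambda>\<close> on \<open>{t, x, y}\<close>; the other six then all
  reduce to \<open>\<lambda>(t) + \<lambda>(x) + \<lambda>(y) = -1\<close>.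
\<close>

text \<open>The coefficient of \<open>e\<^sub>c \<otimes> e\<^sub>d\<close>, at \<open>h\<close>, in the representative
  \<open>d e\<^sub>a + \<Sum>\<^sub>b A\<^sub>b \<otimes> (e\<^bsub>b\<inverse>ab\<^esub> - e\<^sub>a)\<close> of the torsion of \<open>e\<^sub>a\<close>.\<close>
definition torsion_coeff ::
    "'g::group_add set \<Rightarrow> ('g \<Rightarrow> 'g \<Rightarrow> 'g \<Rightarrow> complex) \<Rightarrow> 'g \<Rightarrow> 'g \<Rightarrow> 'g \<Rightarrow> 'g \<Rightarrow> complex" where
  "torsion_coeff C A a c d h =
     (if c \<in> C \<and> d = a then 1 else 0) + (if c = a \<and> d \<in> C then 1 else 0) +
     (\<Sum>b\<in>C. A b c h * ((if d = conjg (- b) a then 1 else 0) - (if d = a then 1 else 0)))"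

lemma torsion_free_iff_torsion_coeff:
  "torsion_free C A \<longleftrightarrow>
     (\<forall>a\<in>C. \<forall>c\<in>C. \<forall>d\<in>C. torsion_coeff C A a (conjg c d) c = torsion_coeff C A a c d)"
proof -
  have "(\<lambda>c d h. d_e C a c d h +
           (\<Sum>b\<in>C. tens1 (A b) (\<lambda>k g. e1 (conjg (- b) a) k g - e1 a k g) c d h))
        = torsion_coeff C A a" for a
    by (simp add: fun_eq_iff torsion_coeff_def d_e_def tens1_def e1_def theta_def Rtr_def)
  then show ?thesis
    by (simp add: torsion_free_def wedge_zero_def in_ker_Psi_def)
qed

lemma conjg_self [simp]: "conjg a a = a"
  by (simp add: conjg_def)

lemma conjg_neg_eq_iff: "conjg (- b) a = c \<longleftrightarrow> conjg b c = (a::'g::group_add)"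
proof -
  have "- b + a + b = c \<longleftrightarrow> a + b = b + c"
    by (metis add.assoc add_minus_cancel minus_add_cancel)
  also have "\<dots> \<longleftrightarrow> b + c + - b = a"
    by (metis diff_add_cancel add_diff_cancel diff_conv_add_uminus)
  finally show ?thesis
    by (simp add: conjg_def)
qed

locale cyclic_class3 =
  fixes t x y :: "'g::group_add"
  assumes distinct: "t \<noteq> x" "t \<noteq> y" "x \<noteq> y"
    and Ad_t: "conjg t x = y" "conjg t y = x"
    and Ad_x: "conjg x t = y" "conjg x y = t"
    and Ad_y: "conjg y t = x" "conjg y x = t"
begin

lemma conjg_neg:
  assumes "a \<in> {t, x, y}" "b \<in> {t, x, y}"
  shows "conjg (- b) a = conjg b a"
  using assms distinct by (auto simp: conjg_neg_eq_iff Ad_t Ad_x Ad_y)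

text \<open>These are the relations of \<open>\<Omega>\<^sup>2\<close>: the two 3-cycles
  \<open>(t, x) \<mapsto> (y, t) \<mapsto> (x, y)\<close> and \<open>(x, t) \<mapsto> (y, x) \<mapsto> (t, y)\<close> of the braiding.\<close>
lemma torsion_free_iff_relations:
  "torsion_free {t, x, y} A \<longleftrightarrow>
     (\<forall>h. \<forall>a\<in>{t, x, y}. let T = (\<lambda>c d. torsion_coeff {t, x, y} A a c d h) in
        T t x = T y t \<and> T y t = T x y \<and> T x t = T y x \<and> T y x = T t y)"
  unfolding torsion_free_iff_torsion_coeff Let_def fun_eq_iff
  by (auto simp: Ad_t Ad_x Ad_y)

text \<open>Lines 1--2, 3--4 and 5--6 are the relations for \<open>a = t\<close>, \<open>a = x\<close> and \<open>a = y\<close>.\<close>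
lemma torsion_free_iff_equations:
  "torsion_free {t, x, y} A \<longleftrightarrow> (\<forall>h.
     1 + A y t h = 1 - A x y h - A y y h \<and> 1 - A x y h - A y y h = A x x h \<and>
     1 - A x x h - A y x h = A y y h \<and> A y y h = 1 + A x t h \<and>
     1 - A t t h - A y t h = A y y h \<and> A y y h = 1 + A t x h \<and>
     1 + A y x h = 1 - A t y h - A y y h \<and> 1 - A t y h - A y y h = A t t h \<and>
     A t t h = 1 + A x y h \<and> 1 + A x y h = 1 - A t x h - A x x h \<and>
     A x x h = 1 + A t y h \<and> 1 + A t y h = 1 - A t t h - A x t h)"
  unfolding torsion_free_iff_relations
  using distinct
  by (intro all_cong1) (simp add: torsion_coeff_def conjg_neg Ad_t Ad_x Ad_y algebra_simps)

lemma torsion_free_iff_parametrized: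
  "torsion_free {t, x, y} A \<longleftrightarrow>
     (\<exists>\<alpha> \<beta> \<gamma> :: 'g \<Rightarrow> complex.
        (\<forall>g. \<alpha> g + \<beta> g + \<gamma> g = -1) \<and>
        A t t = (\<lambda>g. 1 + \<alpha> g) \<and> A t x = \<gamma> \<and> A t y = \<beta> \<and>
        A x t = \<gamma> \<and> A x x = (\<lambda>g. 1 + \<beta> g) \<and> A x y = \<alpha> \<and>
        A y t = \<beta> \<and> A y x = \<alpha> \<and> A y y = (\<lambda>g. 1 + \<gamma> g))"
  (is "_ \<longleftrightarrow> (\<exists>\<alpha> \<beta> \<gamma>. ?param \<alpha> \<beta> \<gamma>)")
proof
  assume "torsion_free {t, x, y} A"
  note eqs = this[unfolded torsion_free_iff_equations, rule_format]
  show "\<exists>\<alpha> \<beta> \<gamma>. ?param \<alpha> \<beta> \<gamma>"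
  proof (intro exI conjI allI ext)
    fix g
    have diag: "A t t g = 1 + A x y g" "A x x g = 1 + A t y g" "A y y g = 1 + A t x g"
      and trace: "1 - A t y g - A y y g = A t t g"
      and off: "A y y g = 1 + A x t g" "1 + A y t g = A x x g" "1 + A y x g = A t t g"
      using eqs[of g] by metis+
    show "A t t g - 1 + A t y g + A t x g = -1"
      using trace diag(3) by (simp add: algebra_simps neg_eq_iff_add_eq_0)
    show "A x t g = A t x g" "A y t g = A t y g" "A y x g = A t t g - 1"
      using diag off by (simp_all add: algebra_simps)
    show "A t t g = 1 + (A t t g - 1)" "A x x g = 1 + A t y g" "A x y g = A t t g - 1"
      "A y y g = 1 + A t x g"
      using diag by (simp_all add: algebra_simps)
  qed simp_all
next
  assume "\<exists>\<alpha> \<beta> \<gamma>. ?param \<alpha> \<beta> \<gamma>"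
  then obtain \<alpha> \<beta> \<gamma> where sum: "\<forall>g. \<alpha> g + \<beta> g + \<gamma> g = -1"
    and A: "A t t = (\<lambda>g. 1 + \<alpha> g)" "A t x = \<gamma>" "A t y = \<beta>"
      "A x t = \<gamma>" "A x x = (\<lambda>g. 1 + \<beta> g)" "A x y = \<alpha>"
      "A y t = \<beta>" "A y x = \<alpha>" "A y y = (\<lambda>g. 1 + \<gamma> g)"
    by blast
  have \<alpha>: "\<alpha> g = -1 - \<beta> g - \<gamma> g" for g
    using sum[rule_format, of g] by (simp add: eq_diff_eq ac_simps)
  show "torsion_free {t, x, y} A"
    unfolding torsion_free_iff_equations A \<alpha>
    by (simp add: algebra_simps)
qed

lemma torsion_free_column_sums:
  assumes "torsion_free {t, x, y} A" "b \<in> {t, x, y}"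
  shows "A t b g + A x b g + A y b g = 0"
proof -
  obtain \<alpha> \<beta> \<gamma> :: "'g \<Rightarrow> complex" where "\<alpha> g + \<beta> g + \<gamma> g = -1"
    and A: "A t t = (\<lambda>g. 1 + \<alpha> g)" "A t x = \<gamma>" "A t y = \<beta>"
      "A x t = \<gamma>" "A x x = (\<lambda>g. 1 + \<beta> g)" "A x y = \<alpha>"
      "A y t = \<beta>" "A y x = \<alpha>" "A y y = (\<lambda>g. 1 + \<gamma> g)"
    using assms(1) unfolding torsion_free_iff_parametrized by blast
  then have "\<alpha> g = -1 - \<beta> g - \<gamma> g"
    by (simp add: eq_diff_eq ac_simps)
  with assms(2) show ?thesis
    by (auto simp: A algebra_simps)
qed

end

theorem proposition2:
  fixes t x y :: "'g::{group_add, finite}"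
    and A :: "'g \<Rightarrow> 'g \<Rightarrow> 'g \<Rightarrow> complex"
  assumes cls: "conj_class t = {t, x, y}"
    and dist: "t \<noteq> x" "t \<noteq> y" "x \<noteq> y"
    and ne: "0 \<notin> {t, x, y}"
    and Ad_t: "conjg t t = t" "conjg t x = y" "conjg t y = x"
    and Ad_x: "conjg x t = y" "conjg x x = x" "conjg x y = t"
    and Ad_y: "conjg y t = x" "conjg y x = t" "conjg y y = y"
  shows "(torsion_free {t, x, y} A \<longleftrightarrow>
           (\<exists>\<alpha> \<beta> \<gamma> :: 'g \<Rightarrow> complex.
              (\<forall>g. \<alpha> g + \<beta> g + \<gamma> g = -1) \<and>
              A t t = (\<lambda>g. 1 + \<alpha> g) \<and> A t x = \<gamma> \<and> A t y = \<beta> \<and>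
              A x t = \<gamma> \<and> A x x = (\<lambda>g. 1 + \<beta> g) \<and> A x y = \<alpha> \<and>
              A y t = \<beta> \<and> A y x = \<alpha> \<and> A y y = (\<lambda>g. 1 + \<gamma> g)))
         \<and> (torsion_free {t, x, y} A \<longrightarrow>
              (\<forall>b\<in>{t, x, y}. \<forall>g. A t b g + A x b g + A y b g = 0))"
proof -
  interpret cyclic_class3 t x y
    using dist Ad_t Ad_x Ad_y by unfold_locales
  show ?thesis
    using torsion_free_iff_parametrized torsion_free_column_sums by blast
qed

end
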